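(* Let $K\subset\mathbb R^d$ be compact and $q>1$. There exists $C_q>0$ such that for any $\mu\in\mathcal F(K)$ and any $r>0$ there exists $\delta>0$ such that every $\nu\in\mathcal P(K)$ with $L(\mu,\nu)<\delta$ satisfies $I_\nu(r,q)\le C_qI_\mu(2r,q)$ and $I_\nu(2r,q)\ge C_q^{-1}I_\mu(r,q)$.
   Context: $\mathcal P(K)$ is the set of Borel probability measures on $K$, $\mathcal F(K)$ the subset of those with finite support. $L$ is the Fortet–Mourier metric $L(\mu,\nu)=\sup_f|\int fd\mu-\int fd\nu|$ over $f:K\to\mathbb R$ with $|f|\le1$ and Lipschitz constant $\le1$. $B(x,r)$ is the open ball and $I_\mu(r,q)=\int_K\mu(B(x,r))^{q-1}d\mu(x)$. *)

theory Defs
  imports "HOL-Probability.Probability"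
begin

text \<open>Borel probability measures on K, represented as Borel probability measures
  on the ambient space that are concentrated on K.\<close>
definition prob_on :: "'a::euclidean_space set \<Rightarrow> 'a measure \<Rightarrow> bool" where
  "prob_on K M \<longleftrightarrow> sets M = sets borel \<and> prob_space M \<and> emeasure M K = 1"

definition finsupp_on :: "'a::euclidean_space set \<Rightarrow> 'a measure \<Rightarrow> bool" where
  "finsupp_on K M \<longleftrightarrow> prob_on K M \<and> (\<exists>S. finite S \<and> S \<subseteq> K \<and> emeasure M S = 1)"

definition FM_dist :: "'a::euclidean_space set \<Rightarrow> 'a measure \<Rightarrow> 'a measure \<Rightarrow> real" where
  "FM_dist K M N = Sup {\<bar>(LINT x:K|M. f x) - (LINT x:K|N. f x)\<bar> | f.
      (\<forall>x\<in>K. \<bar>f x\<bar> \<le> 1) \<and> 1-lipschitz_on K f}"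

definition corr_int :: "'a::euclidean_space measure \<Rightarrow> real \<Rightarrow> real \<Rightarrow> real" where
  "corr_int M r q = (\<integral>x. (measure M (ball x r)) powr (q - 1) \<partial>M)"

end

theory Submission
  imports Defs
begin

text \<open>A finitely supported \<open>\<mu> = \<Sum>\<^sub>x p\<^sub>x \<delta>\<^sub>x\<close> has \<open>I\<^sub>\<mu>(r,q) = \<Sum>\<^sub>x p\<^sub>x \<mu>(B(x,r))\<^sup>q\<^sup>-\<^sup>1\<close>, and
  integrating 1-Lipschitz tent functions shows that \<open>L(\<mu>,\<nu>) \<le> t\<epsilon>\<close> implies
  \<open>\<nu>(B(x,a)) \<le> \<mu>(B(x,a+\<epsilon>)) + t\<close> and vice versa. Take \<open>\<epsilon>\<close> smaller than half the gaps between
  support points. Then \<open>\<nu>(B(x,\<epsilon>)) \<approx> p\<^sub>x\<close> up to \<open>2t\<close>, all but \<open>2t\<close> of the mass of \<open>\<nu>\<close> lies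
  \<open>\<epsilon>\<close>-close to the support, and for \<open>y \<in> B(x,\<epsilon>)\<close> the balls satisfy
  \<open>\<nu>(B(y,r)) \<le> \<mu>(B(x,2r)) + t\<close> and \<open>\<mu>(B(x,r)) - t \<le> \<nu>(B(y,2r))\<close> once \<open>2\<epsilon> \<le> r\<close>.
  Hence \<open>I\<^sub>\<nu>(r,q)\<close> and \<open>I\<^sub>\<nu>(2r,q)\<close> are bounded above and below by perturbations of
  \<open>I\<^sub>\<mu>(2r,q)\<close> and \<open>I\<^sub>\<mu>(r,q)\<close> that tend to them as \<open>t \<rightarrow> 0\<close>; since these are positive, the
  constant \<open>C\<^sub>q = 2\<close> works.\<close>

lemma prob_onD:
  assumes "prob_on K N"
  shows "prob_space N" "sets N = sets borel" "space N = UNIV" "K \<in> sets borel" "AE y in N. y \<in> K"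
proof -
  show ps: "prob_space N" and sets: "sets N = sets borel" using assms by (auto simp: prob_on_def)
  then show "space N = UNIV" by (metis sets_eq_imp_space_eq space_borel)
  have K1: "emeasure N K = 1" using assms by (auto simp: prob_on_def)
  then have "K \<in> sets N" by (metis emeasure_notin_sets zero_neq_one)
  then show "K \<in> sets borel" using sets by simp
  show "AE y in N. y \<in> K"
    using prob_space.AE_prob_1[OF ps] K1 by (simp add: measure_def)
qed

lemma measure_mono_prob_on:
  assumes "prob_on K M" "A \<subseteq> B" "B \<in> sets borel"
  shows "measure M A \<le> measure M B"
  using assms prob_onD(2)[OF assms(1)]
  by (intro finite_measure.finite_measure_mono prob_space.axioms(1) prob_onD(1)) auto

lemma borel_measurable_measure_ball:
  fixes N :: "'a::euclidean_space measure"
  assumes "sigma_finite_measure N" "sets N = sets borel"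
  shows "(\<lambda>y. measure N (ball y s)) \<in> borel_measurable borel"
proof -
  define Q where "Q = {p::'a \<times> 'a. dist (fst p) (snd p) < s}"
  have "open Q" unfolding Q_def by (intro open_Collect_less continuous_intros)
  moreover have "sets ((borel :: 'a measure) \<Otimes>\<^sub>M N) = sets (borel \<Otimes>\<^sub>M (borel :: 'a measure))"
    by (rule sets_pair_measure_cong) (simp_all add: assms(2))
  moreover have "sets (borel \<Otimes>\<^sub>M (borel :: 'a measure)) = sets (borel :: ('a \<times> 'a) measure)"
    by (subst borel_prod) (rule refl)
  ultimately have "Q \<in> sets (borel \<Otimes>\<^sub>M N)" by simp
  then have "(\<lambda>x. emeasure N (Pair x -` Q)) \<in> borel_measurable borel"
    by (rule sigma_finite_measure.measurable_emeasure_Pair[OF assms(1)])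
  moreover have "Pair x -` Q = ball x s" for x by (auto simp: Q_def ball_def)
  ultimately show ?thesis by (simp add: measure_def)
qed

lemma set_integral_prob_on:
  fixes M :: "'a::euclidean_space measure" and f :: "'a \<Rightarrow> real"
  assumes "prob_on K M" "f \<in> borel_measurable borel"
  shows "(LINT x:K|M. f x) = (\<integral>x. f x \<partial>M)"
proof -
  note M = prob_onD[OF assms(1)]
  show ?thesis unfolding set_lebesgue_integral_def
  proof (rule integral_cong_AE)
    show "f \<in> borel_measurable M" using assms(2) by (simp add: measurable_cong_sets[OF M(2) refl])
    then show "(\<lambda>x. indicator K x *\<^sub>R f x) \<in> borel_measurable M"
      using M(2,4) by (intro borel_measurable_scaleR borel_measurable_indicator) simp_all
    show "AE x in M. indicator K x *\<^sub>R f x = f x"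
      using M(5) by eventually_elim simp
  qed
qed

lemma abs_set_integral_le_1:
  fixes M :: "'a::euclidean_space measure" and f :: "'a \<Rightarrow> real"
  assumes "prob_on K M" "\<forall>x\<in>K. \<bar>f x\<bar> \<le> 1"
  shows "\<bar>LINT x:K|M. f x\<bar> \<le> 1"
proof (cases "integrable M (\<lambda>x. indicator K x *\<^sub>R f x)")
  case True
  interpret prob_space M using prob_onD[OF assms(1)] by simp
  have "\<bar>\<integral>x. indicator K x *\<^sub>R f x \<partial>M\<bar> \<le> (\<integral>x. 1 \<partial>M)"
    by (rule integral_abs_bound_integral[OF True]) (use assms(2) in \<open>auto simp: indicator_def\<close>)
  then show ?thesis by (simp add: set_lebesgue_integral_def prob_space)
qed (simp add: set_lebesgue_integral_def not_integrable_integral_eq)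

lemma FM_dist_ge:
  fixes M :: "'a::euclidean_space measure" and f :: "'a \<Rightarrow> real"
  assumes "prob_on K M" "prob_on K N" "\<forall>x\<in>K. \<bar>f x\<bar> \<le> 1" "1-lipschitz_on K f"
  shows "\<bar>(LINT x:K|M. f x) - (LINT x:K|N. f x)\<bar> \<le> FM_dist K M N"
proof -
  have bound: "\<bar>(LINT x:K|M. g x) - (LINT x:K|N. g x)\<bar> \<le> 2"
    if "\<forall>x\<in>K. \<bar>g x\<bar> \<le> 1" for g :: "'a \<Rightarrow> real"
    using abs_set_integral_le_1[OF assms(1) that] abs_set_integral_le_1[OF assms(2) that] by linarith
  show ?thesis unfolding FM_dist_def
    by (rule cSup_upper, use assms(3,4) in blast, rule bdd_aboveI[where M="2::real"], use bound in blast)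
qed

lemma FM_dist_commute: "FM_dist K M N = FM_dist K N M"
  unfolding FM_dist_def by (simp add: abs_minus_commute)

lemma lipschitz_on_dist: "1-lipschitz_on U (dist (x::'a::metric_space))"
proof (rule lipschitz_onI)
  fix y z
  show "dist (dist x y) (dist x z) \<le> 1 * dist y z"
    using abs_dist_diff_le[of y x z] by (simp add: dist_real_def dist_commute)
qed simp

lemma lipschitz_on_infdist: "1-lipschitz_on U (\<lambda>y::'a::metric_space. infdist y S)"
  by (rule lipschitz_onI) (simp_all add: dist_real_def infdist_triangle_abs)

lemma infdist_sublevel_sets: "{y::'a::metric_space. infdist y S < c} \<in> sets borel"
proof -
  have "(\<lambda>y. infdist y S) \<in> borel_measurable borel"
    by (intro borel_measurable_continuous_onI lipschitz_on_continuous_on[OF lipschitz_on_infdist])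
  then show ?thesis by measurable
qed

text \<open>The tent function \<open>y \<mapsto> max 0 (min e (a + e - d y))\<close> is 1-Lipschitz, bounded by 1,
  and lies between \<open>e\<close> times the indicators of \<open>{d < a}\<close> and \<open>{d < a + e}\<close>.\<close>
lemma measure_sublevel_le_FM_dist:
  fixes M N :: "'a::euclidean_space measure" and d :: "'a \<Rightarrow> real"
  assumes M: "prob_on K M" and N: "prob_on K N" and e: "0 < e" "e \<le> 1"
    and d: "1-lipschitz_on UNIV d" and FM: "FM_dist K M N \<le> t * e"
  shows "measure N {y. d y < a} \<le> measure M {y. d y < a + e} + t"
proof -
  define f where "f y = max 0 (min e (a + e - d y))" for y
  have "1-lipschitz_on K f"
  proof (rule lipschitz_onI)
    fix x y
    have "dist (d x) (d y) \<le> 1 * dist x y" by (rule lipschitz_onD[OF d]) auto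
    then show "dist (f x) (f y) \<le> 1 * dist x y"
      by (simp add: f_def dist_real_def max_def min_def abs_if split: if_splits)
  qed simp
  moreover have "\<forall>x\<in>K. \<bar>f x\<bar> \<le> 1" using e by (auto simp: f_def)
  moreover have d_meas: "d \<in> borel_measurable borel"
    by (intro borel_measurable_continuous_onI lipschitz_on_continuous_on[OF d])
  then have f_meas: "f \<in> borel_measurable borel" unfolding f_def by measurable
  ultimately have FM_f: "(\<integral>x. f x \<partial>N) - (\<integral>x. f x \<partial>M) \<le> t * e"
    using FM_dist_ge[OF M N] set_integral_prob_on[OF M] set_integral_prob_on[OF N] FM by fastforce
  have sublevel_sets: "{y. d y < c} \<in> sets borel" for c using d_meas by measurable
  have integrable: "integrable L f" "integrable L (\<lambda>y. e * indicator {y. d y < c} y)"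
    if "prob_on K L" for L c
  proof -
    note L = prob_onD[OF that]
    interpret prob_space L using L by simp
    show "integrable L f"
      using f_meas e L(2) by (intro integrable_const_bound[where B=1]) (auto simp: f_def)
    show "integrable L (\<lambda>y. e * indicator {y. d y < c} y)"
      using sublevel_sets L(2) by (auto simp: emeasure_finite less_top[symmetric])
  qed
  have "e * measure N {y. d y < a} = (\<integral>y. e * indicator {y. d y < a} y \<partial>N)"
    using prob_onD(3)[OF N] by simp
  also have "\<dots> \<le> (\<integral>y. f y \<partial>N)"
    by (rule integral_mono[OF integrable(2)[OF N] integrable(1)[OF N]])
      (use e in \<open>auto simp: f_def indicator_def\<close>)
  also have "\<dots> \<le> (\<integral>y. f y \<partial>M) + t * e"
    using FM_f by simp
  also have "(\<integral>y. f y \<partial>M) \<le> (\<integral>y. e * indicator {y. d y < a + e} y \<partial>M)"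
    by (rule integral_mono[OF integrable(1)[OF M] integrable(2)[OF M]])
      (use e in \<open>auto simp: f_def indicator_def\<close>)
  also have "\<dots> = e * measure M {y. d y < a + e}"
    using prob_onD(3)[OF M] by simp
  finally have "e * measure N {y. d y < a} \<le> e * (measure M {y. d y < a + e} + t)"
    by (simp add: algebra_simps)
  then show ?thesis using e by simp
qed

lemma measure_ball_le_FM_dist:
  fixes M N :: "'a::euclidean_space measure"
  assumes "prob_on K M" "prob_on K N" "0 < e" "e \<le> 1" "FM_dist K M N \<le> t * e"
  shows "measure N (ball x a) \<le> measure M (ball x (a + e)) + t"
  using measure_sublevel_le_FM_dist[OF assms(1-4) lipschitz_on_dist assms(5), of x a]
  by (simp add: ball_def)

lemma integral_finite_support:
  fixes M :: "'a::t1_space measure" and g :: "'a \<Rightarrow> real"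
  assumes "prob_space M" "sets M = sets borel" "finite S" "measure M S = 1"
    and "g \<in> borel_measurable borel"
  shows "(\<integral>y. g y \<partial>M) = (\<Sum>x\<in>S. measure M {x} * g x)"
proof -
  interpret prob_space M by fact
  have singletons: "{x} \<in> sets M" for x using assms(2) by simp
  have "(\<integral>y. g y \<partial>M) = (\<integral>y. (\<Sum>x\<in>S. g x * indicator {x} y) \<partial>M)"
  proof (rule integral_cong_AE)
    show "g \<in> borel_measurable M" using assms(5) by (simp add: measurable_cong_sets[OF assms(2) refl])
    show "(\<lambda>y. \<Sum>x\<in>S. g x * indicator {x} y) \<in> borel_measurable M"
      using singletons by measurable
    show "AE y in M. g y = (\<Sum>x\<in>S. g x * indicator {x} y)"
      using AE_prob_1[OF assms(4)]
    proof eventually_elim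
      case (elim y)
      have "(\<Sum>x\<in>S. g x * indicator {x} y) = (\<Sum>x\<in>S. if x = y then g y else 0)"
        by (intro sum.cong) (auto simp: indicator_def)
      then show ?case using elim assms(3) by simp
    qed
  qed
  also have "\<dots> = (\<Sum>x\<in>S. measure M {x} * g x)"
    using singletons
    by (subst Bochner_Integration.integral_sum)
      (auto simp: emeasure_finite less_top[symmetric] mult.commute)
  finally show ?thesis .
qed

lemma measure_finite_support:
  fixes M :: "'a::t1_space measure"
  assumes "prob_space M" "sets M = sets borel" "finite S" "measure M S = 1" "A \<in> sets borel"
  shows "measure M A = (\<Sum>x\<in>S \<inter> A. measure M {x})"
proof -
  have "space M = UNIV" using assms(2) by (metis sets_eq_imp_space_eq space_borel)
  then have "measure M A = (\<integral>y. indicator A y \<partial>M)" by simp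
  also have "\<dots> = (\<Sum>x\<in>S. measure M {x} * indicator A x)"
    using assms by (intro integral_finite_support) simp_all
  also have "\<dots> = (\<Sum>x\<in>S \<inter> A. measure M {x})"
    using assms(3) by (simp add: sum.inter_restrict indicator_def if_distrib)
  finally show ?thesis .
qed

lemma corr_int_finite_support:
  fixes M :: "'a::euclidean_space measure"
  assumes "prob_space M" "sets M = sets borel" "finite S" "measure M S = 1"
  shows "corr_int M s q = (\<Sum>x\<in>S. measure M {x} * measure M (ball x s) powr (q - 1))"
proof -
  have "sigma_finite_measure M"
    using assms(1) by (simp add: prob_space_imp_sigma_finite)
  then have "(\<lambda>y. measure M (ball y s) powr (q - 1)) \<in> borel_measurable borel"
    using borel_measurable_measure_ball[OF _ assms(2)] by measurable
  then show ?thesis unfolding corr_int_def by (rule integral_finite_support[OF assms])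
qed

lemma corr_int_finite_support_pos:
  fixes M :: "'a::euclidean_space measure"
  assumes "prob_space M" "sets M = sets borel" "finite S" "measure M S = 1" "0 < s"
  shows "0 < corr_int M s q"
proof -
  interpret prob_space M by fact
  have "(\<Sum>x\<in>S. measure M {x}) = 1"
    using measure_finite_support[OF assms(1-4), of S] assms(2-4) by (simp add: finite_imp_closed)
  then have "\<exists>x\<in>S. 0 < measure M {x}"
    using sum_nonpos[of S "\<lambda>x. measure M {x}"] by (force simp: not_less)
  then obtain x where "x \<in> S" "0 < measure M {x}" ..
  moreover have "measure M {x} \<le> measure M (ball x s)"
    using assms(2,5) by (intro finite_measure_mono) auto
  ultimately have "0 < measure M {x} * measure M (ball x s) powr (q - 1)" by simp
  then show ?thesis unfolding corr_int_finite_support[OF assms(1-4)]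
    by (rule sum_pos2[OF assms(3) \<open>x \<in> S\<close>]) simp
qed

lemma
  fixes N :: "'a measure" and c :: "'b \<Rightarrow> real"
  assumes "finite_measure N" "\<And>x. x \<in> S \<Longrightarrow> A x \<in> sets N"
  shows integrable_sum_indicator: "integrable N (\<lambda>y. \<Sum>x\<in>S. c x * indicator (A x) y)"
    and integral_sum_indicator: "(\<integral>y. (\<Sum>x\<in>S. c x * indicator (A x) y) \<partial>N) = (\<Sum>x\<in>S. c x * measure N (A x))"
proof -
  interpret finite_measure N by fact
  have "integrable N (\<lambda>y. c x * indicator (A x) y)" if "x \<in> S" for x
    using assms(2)[OF that] by (auto simp: emeasure_finite less_top[symmetric])
  then show "integrable N (\<lambda>y. \<Sum>x\<in>S. c x * indicator (A x) y)"
    and "(\<integral>y. (\<Sum>x\<in>S. c x * indicator (A x) y) \<partial>N) = (\<Sum>x\<in>S. c x * measure N (A x))"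
    using assms(2) by (auto simp: Bochner_Integration.integral_sum sets.Int_space_eq2 intro!: sum.cong)
qed

context
  fixes K S :: "'a::euclidean_space set" and M N :: "'a measure" and \<epsilon> t :: real
  assumes M: "prob_on K M" and N: "prob_on K N"
    and S: "finite S" "measure M S = 1"
    and separated: "\<And>x y. x \<in> S \<Longrightarrow> y \<in> S \<Longrightarrow> x \<noteq> y \<Longrightarrow> 2 * \<epsilon> \<le> dist x y"
    and \<epsilon>: "0 < \<epsilon>" "\<epsilon> \<le> 1"
    and FM: "FM_dist K M N \<le> t * \<epsilon>"
begin

lemma measure_ball_support_le:
  assumes "x \<in> S"
  shows "measure N (ball x \<epsilon>) \<le> measure M {x} + t"
proof -
  note M' = prob_onD[OF M]
  have "measure N (ball x \<epsilon>) \<le> measure M (ball x (\<epsilon> + \<epsilon>)) + t"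
    by (rule measure_ball_le_FM_dist[OF M N \<epsilon> FM])
  also have "S \<inter> ball x (\<epsilon> + \<epsilon>) = {x}"
  proof -
    have "z = x" if "z \<in> S" "dist x z < \<epsilon> + \<epsilon>" for z
      using separated[OF assms that(1)] that(2) by fastforce
    then show ?thesis using assms \<epsilon>(1) by auto
  qed
  then have "measure M (ball x (\<epsilon> + \<epsilon>)) = measure M {x}"
    using measure_finite_support[OF M'(1,2) S, of "ball x (\<epsilon> + \<epsilon>)"] by simp
  finally show ?thesis .
qed

lemma FM_dist_swapped_le: "FM_dist K N M \<le> (2 * t) * (\<epsilon> / 2)"
  using FM FM_dist_commute[of K M N] by simp

lemma measure_support_le_ball: "measure M {x} - 2 * t \<le> measure N (ball x \<epsilon>)"
proof -
  have "measure M {x} \<le> measure M (ball x (\<epsilon> / 2))"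
    using \<epsilon> by (intro measure_mono_prob_on[OF M]) auto
  also have "\<dots> \<le> measure N (ball x (\<epsilon> / 2 + \<epsilon> / 2)) + 2 * t"
    by (rule measure_ball_le_FM_dist[OF N M _ _ FM_dist_swapped_le]) (use \<epsilon> in auto)
  finally show ?thesis by simp
qed

lemma measure_near_support: "1 - 2 * t \<le> measure N {y. infdist y S < \<epsilon>}"
proof -
  have "measure M S \<le> measure M {y. infdist y S < \<epsilon> / 2}"
    using \<epsilon> by (intro measure_mono_prob_on[OF M _ infdist_sublevel_sets]) auto
  then have "1 \<le> measure M {y. infdist y S < \<epsilon> / 2}"
    using S(2) by simp
  also have "\<dots> \<le> measure N {y. infdist y S < \<epsilon> / 2 + \<epsilon> / 2} + 2 * t"
    by (rule measure_sublevel_le_FM_dist[OF N M _ _ lipschitz_on_infdist FM_dist_swapped_le])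
      (use \<epsilon> in auto)
  finally show ?thesis by simp
qed

lemma measure_ball_powr_le_majorant:
  assumes "1 \<le> q" "2 * \<epsilon> \<le> r"
  shows "measure N (ball y r) powr (q - 1) \<le>
    (\<Sum>x\<in>S. (measure M (ball x (2 * r)) + t) powr (q - 1) * indicator (ball x \<epsilon>) y)
      + indicator (- {y. infdist y S < \<epsilon>}) y"
    (is "_ \<le> ?near y + _")
proof (cases "infdist y S < \<epsilon>")
  case False
  have "measure N (ball y r) powr (q - 1) \<le> 1"
    using assms(1) by (intro powr_le1) (auto simp: prob_space.prob_le_1[OF prob_onD(1)[OF N]])
  moreover have "0 \<le> ?near y" by (intro sum_nonneg) auto
  ultimately show ?thesis using False by simp
next
  case True
  have "S \<noteq> {}" using S(2) by auto
  then obtain x where x: "x \<in> S" "infdist y S = dist y x"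
    using infdist_attains_inf[OF finite_imp_closed[OF S(1)]] by blast
  with True have "dist y x < \<epsilon>" by simp
  have "measure N (ball y r) \<le> measure M (ball y (r + \<epsilon>)) + t"
    by (rule measure_ball_le_FM_dist[OF M N \<epsilon> FM])
  also have "measure M (ball y (r + \<epsilon>)) \<le> measure M (ball x (2 * r))"
    using \<open>dist y x < \<epsilon>\<close> assms(2)
    by (intro measure_mono_prob_on[OF M] subsetI) (simp_all, metric)
  finally have "measure N (ball y r) powr (q - 1) \<le> (measure M (ball x (2 * r)) + t) powr (q - 1)"
    using assms(1) by (intro powr_mono2) auto
  also have "\<dots> = (measure M (ball x (2 * r)) + t) powr (q - 1) * indicator (ball x \<epsilon>) y"
    using \<open>dist y x < \<epsilon>\<close> by (simp add: dist_commute)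
  also have "\<dots> \<le> ?near y"
    by (rule member_le_sum[OF x(1)]) (auto simp: S(1))
  finally show ?thesis using True by simp
qed

lemma corr_int_le_perturbed_sum:
  assumes "1 \<le> q" "2 * \<epsilon> \<le> r"
  shows "corr_int N r q \<le>
    (\<Sum>x\<in>S. (measure M {x} + t) * (measure M (ball x (2 * r)) + t) powr (q - 1)) + 2 * t"
proof -
  define a where "a x = (measure M (ball x (2 * r)) + t) powr (q - 1)" for x
  define U where "U = {y. infdist y S < \<epsilon>}"
  note N' = prob_onD[OF N]
  interpret prob_space N using N'(1) by simp
  have U: "U \<in> sets N" using N'(2) infdist_sublevel_sets by (simp add: U_def)
  have "- U \<in> sets N" using U N'(3) by (metis Compl_eq_Diff_UNIV sets.compl_sets)
  then have integrable_compl: "integrable N (indicator (- U) :: 'a \<Rightarrow> real)"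
    by (auto simp: emeasure_finite less_top[symmetric])
  have balls: "ball x \<epsilon> \<in> sets N" for x using N'(2) by simp
  note integrable_near = integrable_sum_indicator[OF finite_measure_axioms balls, where c=a and S=S]
  have "corr_int N r q \<le> (\<integral>y. (\<Sum>x\<in>S. a x * indicator (ball x \<epsilon>) y) + indicator (- U) y \<partial>N)"
    unfolding corr_int_def
  proof (rule integral_mono')
    show "integrable N (\<lambda>y. (\<Sum>x\<in>S. a x * indicator (ball x \<epsilon>) y) + indicator (- U) y)"
      by (rule Bochner_Integration.integrable_add[OF integrable_near integrable_compl])
    show "measure N (ball y r) powr (q - 1) \<le> (\<Sum>x\<in>S. a x * indicator (ball x \<epsilon>) y) + indicator (- U) y"
      for y unfolding a_def U_def by (rule measure_ball_powr_le_majorant[OF assms])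
    show "0 \<le> (\<Sum>x\<in>S. a x * indicator (ball x \<epsilon>) y) + indicator (- U) y" for y
      by (intro add_nonneg_nonneg sum_nonneg) (auto simp: a_def)
  qed
  also have "\<dots> = (\<Sum>x\<in>S. a x * measure N (ball x \<epsilon>)) + measure N (- U)"
    using integral_sum_indicator[OF finite_measure_axioms balls] N'(3)
    by (simp add: Bochner_Integration.integral_add[OF integrable_near integrable_compl])
  also have "\<dots> \<le> (\<Sum>x\<in>S. a x * (measure M {x} + t)) + 2 * t"
  proof (rule add_mono)
    show "(\<Sum>x\<in>S. a x * measure N (ball x \<epsilon>)) \<le> (\<Sum>x\<in>S. a x * (measure M {x} + t))"
      by (intro sum_mono mult_left_mono measure_ball_support_le) (auto simp: a_def)
    have "measure N (- U) = 1 - measure N U"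
      using prob_compl[OF U] N'(3) by (simp add: Compl_eq_Diff_UNIV)
    then show "measure N (- U) \<le> 2 * t"
      using measure_near_support by (simp add: U_def)
  qed
  finally show ?thesis by (simp add: a_def mult.commute)
qed

lemma minorant_le_measure_ball_powr:
  assumes "1 \<le> q" "2 * \<epsilon> \<le> r"
  shows "(\<Sum>x\<in>S. max 0 (measure M (ball x r) - t) powr (q - 1) * indicator (ball x \<epsilon>) y)
    \<le> measure N (ball y (2 * r)) powr (q - 1)"
    (is "?near y \<le> _")
proof (cases "\<exists>x\<in>S. dist x y < \<epsilon>")
  case False
  then have "?near y = 0" by (intro sum.neutral) auto
  then show ?thesis by simp
next
  case True
  then obtain x where x: "x \<in> S" "dist x y < \<epsilon>" by blast
  have "\<not> dist z y < \<epsilon>" if "z \<in> S - {x}" for z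
    using separated[of z x] that x dist_triangle[of z x y] by (auto simp: dist_commute)
  then have "?near y = max 0 (measure M (ball x r) - t) powr (q - 1)"
    using x by (simp add: sum.remove[OF S(1) x(1)] sum.neutral dist_commute)
  also have "\<dots> \<le> measure N (ball y (2 * r)) powr (q - 1)"
  proof (rule powr_mono2)
    have "measure M (ball x r) \<le> measure N (ball x (r + \<epsilon>)) + t"
      using FM FM_dist_commute[of K M N] by (intro measure_ball_le_FM_dist[OF N M \<epsilon>]) simp
    also have "measure N (ball x (r + \<epsilon>)) \<le> measure N (ball y (2 * r))"
      using x(2) assms(2) by (intro measure_mono_prob_on[OF N] subsetI) (simp_all, metric)
    finally show "max 0 (measure M (ball x r) - t) \<le> measure N (ball y (2 * r))"
      by simp
  qed (use assms(1) in auto)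
  finally show ?thesis .
qed

lemma perturbed_sum_le_corr_int:
  assumes "1 \<le> q" "2 * \<epsilon> \<le> r"
  shows "(\<Sum>x\<in>S. max 0 (measure M {x} - 2 * t) * max 0 (measure M (ball x r) - t) powr (q - 1))
    \<le> corr_int N (2 * r) q"
proof -
  define b where "b x = max 0 (measure M (ball x r) - t) powr (q - 1)" for x
  note N' = prob_onD[OF N]
  interpret prob_space N using N'(1) by simp
  have balls: "ball x \<epsilon> \<in> sets N" for x using N'(2) by simp
  have "(\<Sum>x\<in>S. max 0 (measure M {x} - 2 * t) * b x) \<le> (\<Sum>x\<in>S. b x * measure N (ball x \<epsilon>))"
  proof (rule sum_mono)
    fix x
    have "max 0 (measure M {x} - 2 * t) \<le> measure N (ball x \<epsilon>)"
      using measure_support_le_ball[of x] by simp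
    then show "max 0 (measure M {x} - 2 * t) * b x \<le> b x * measure N (ball x \<epsilon>)"
      by (subst mult.commute) (rule mult_left_mono, simp_all add: b_def)
  qed
  also have "\<dots> = (\<integral>y. (\<Sum>x\<in>S. b x * indicator (ball x \<epsilon>) y) \<partial>N)"
    by (rule integral_sum_indicator[OF finite_measure_axioms balls, symmetric])
  also have "\<dots> \<le> corr_int N (2 * r) q"
    unfolding corr_int_def
  proof (rule integral_mono)
    show "integrable N (\<lambda>y. \<Sum>x\<in>S. b x * indicator (ball x \<epsilon>) y)"
      by (rule integrable_sum_indicator[OF finite_measure_axioms balls])
    have "(\<lambda>y. measure N (ball y (2 * r)) powr (q - 1)) \<in> borel_measurable N"
      using borel_measurable_measure_ball[OF prob_space_imp_sigma_finite[OF N'(1)] N'(2)]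
      by (simp add: measurable_cong_sets[OF N'(2) refl])
    then show "integrable N (\<lambda>y. measure N (ball y (2 * r)) powr (q - 1))"
      using assms(1) by (intro integrable_const_bound[where B=1]) (auto intro!: powr_le1)
    show "(\<Sum>x\<in>S. b x * indicator (ball x \<epsilon>) y) \<le> measure N (ball y (2 * r)) powr (q - 1)" for y
      unfolding b_def by (rule minorant_le_measure_ball_powr[OF assms])
  qed
  finally show ?thesis by (simp add: b_def)
qed

end

lemma tendsto_perturbed_upper_sum:
  fixes p m :: "'b \<Rightarrow> real"
  assumes "0 < e" "\<And>x. x \<in> S \<Longrightarrow> 0 \<le> m x"
  shows "((\<lambda>t. (\<Sum>x\<in>S. (p x + t) * (m x + t) powr e) + 2 * t) \<longlongrightarrow> (\<Sum>x\<in>S. p x * m x powr e))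
    (at_right 0)"
proof -
  have "((\<lambda>t. (\<Sum>x\<in>S. (p x + t) * (m x + t) powr e) + 2 * t) \<longlongrightarrow>
      (\<Sum>x\<in>S. (p x + 0) * (m x + 0) powr e) + 2 * 0) (at_right 0)"
  proof (intro tendsto_intros)
    fix x assume "x \<in> S"
    then show "m x + 0 \<noteq> 0 \<or> 0 < e \<and> (\<forall>\<^sub>F t in at_right 0. 0 \<le> m x + t)"
      using assms eventually_at_right_less[of 0] by (auto elim: eventually_mono)
  qed
  then show ?thesis by simp
qed

lemma tendsto_perturbed_lower_sum:
  fixes p m :: "'b \<Rightarrow> real"
  assumes "0 < e" "\<And>x. x \<in> S \<Longrightarrow> 0 \<le> p x" "\<And>x. x \<in> S \<Longrightarrow> 0 \<le> m x"
  shows "((\<lambda>t. \<Sum>x\<in>S. max 0 (p x - 2 * t) * max 0 (m x - t) powr e) \<longlongrightarrow> (\<Sum>x\<in>S. p x * m x powr e))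
    (at_right 0)"
proof -
  have "((\<lambda>t. \<Sum>x\<in>S. max 0 (p x - 2 * t) * max 0 (m x - t) powr e) \<longlongrightarrow>
      (\<Sum>x\<in>S. max 0 (p x - 2 * 0) * max 0 (m x - 0) powr e)) (at_right 0)"
    using assms(1) by (intro tendsto_intros) auto
  also have "(\<Sum>x\<in>S. max 0 (p x - 2 * 0) * max 0 (m x - 0) powr e) = (\<Sum>x\<in>S. p x * m x powr e)"
    using assms(2,3) by (intro sum.cong) (simp_all add: max_absorb2)
  finally show ?thesis .
qed

lemma eventually_separated_at_right_0:
  fixes S :: "'a::metric_space set"
  assumes "finite S"
  shows "\<forall>\<^sub>F t in at_right 0. \<forall>x\<in>S. \<forall>y\<in>S. x \<noteq> y \<longrightarrow> t < dist x y"
proof (intro eventually_ball_finite ballI assms)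
  fix x y :: 'a
  show "\<forall>\<^sub>F t in at_right 0. x \<noteq> y \<longrightarrow> t < dist x y"
    by (cases "x = y") (auto simp: eventually_at_right_field intro!: exI[of _ "dist x y"])
qed

lemma eventually_corr_int_bounds_at_right_0:
  fixes M :: "'a::euclidean_space measure"
  assumes M: "prob_on K M" and S: "finite S" "measure M S = 1" and "1 < q" "0 < r"
  shows "\<forall>\<^sub>F t in at_right 0. \<forall>N. prob_on K N \<and> FM_dist K M N \<le> t * (t / 2) \<longrightarrow>
    corr_int N r q \<le> 2 * corr_int M (2 * r) q \<and> corr_int M r q / 2 \<le> corr_int N (2 * r) q"
proof -
  note I = corr_int_finite_support[OF prob_onD(1,2)[OF M] S]
  note I_pos = corr_int_finite_support_pos[OF prob_onD(1,2)[OF M] S]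
  have below: "\<forall>\<^sub>F t in at_right 0. t < c" if "0 < c" for c :: real
    using that by (auto simp: eventually_at_right_field)
  have "\<forall>\<^sub>F t in at_right 0.
      (\<Sum>x\<in>S. (measure M {x} + t) * (measure M (ball x (2 * r)) + t) powr (q - 1)) + 2 * t
        < 2 * corr_int M (2 * r) q"
    using I_pos[of "2 * r"] assms(4,5)
    by (intro order_tendstoD(2)[OF tendsto_perturbed_upper_sum]) (auto simp: I)
  moreover have "\<forall>\<^sub>F t in at_right 0.
      corr_int M r q / 2
        < (\<Sum>x\<in>S. max 0 (measure M {x} - 2 * t) * max 0 (measure M (ball x r) - t) powr (q - 1))"
    using I_pos[of r] assms(4,5)
    by (intro order_tendstoD(1)[OF tendsto_perturbed_lower_sum]) (auto simp: I)
  ultimately show ?thesis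
    using eventually_at_right_less[of 0] below[OF zero_less_one] below[OF \<open>0 < r\<close>]
      eventually_separated_at_right_0[OF S(1)]
  proof eventually_elim
    case (elim t)
    txt \<open>The single parameter \<open>t\<close> also fixes the radius \<open>\<epsilon> = t / 2\<close>.\<close>
    then have \<epsilon>: "0 < t / 2" "t / 2 \<le> 1" "2 * (t / 2) \<le> r" by auto
    have separated: "2 * (t / 2) \<le> dist x y" if "x \<in> S" "y \<in> S" "x \<noteq> y" for x y
      using less_imp_le[OF elim(6)[rule_format, OF that]] by simp
    show ?case
    proof (intro allI impI)
      fix N assume "prob_on K N \<and> FM_dist K M N \<le> t * (t / 2)"
      then have N: "prob_on K N" and FM: "FM_dist K M N \<le> t * (t / 2)" by auto
      note upper = corr_int_le_perturbed_sum[where \<epsilon>="t / 2", OF M N S separated \<epsilon>(1,2) FM _ \<epsilon>(3)]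
      note lower = perturbed_sum_le_corr_int[where \<epsilon>="t / 2", OF M N S separated \<epsilon>(1,2) FM _ \<epsilon>(3)]
      show "corr_int N r q \<le> 2 * corr_int M (2 * r) q \<and> corr_int M r q / 2 \<le> corr_int N (2 * r) q"
        using upper[of q] lower[of q] elim(1,2) assms(4) by linarith
    qed
  qed
qed

theorem corollary2p2:
  fixes K :: "'a::euclidean_space set" and q :: real
  assumes "compact K" and "q > 1"
  shows "\<exists>C>0. \<forall>M. finsupp_on K M \<longrightarrow> (\<forall>r>0. \<exists>\<delta>>0. \<forall>N. prob_on K N \<and> FM_dist K M N < \<delta> \<longrightarrow>
           corr_int N r q \<le> C * corr_int M (2 * r) q \<and> corr_int N (2 * r) q \<ge> corr_int M r q / C)"
proof (rule exI[of _ 2], intro conjI allI impI)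
  show "(0::real) < 2" by simp
  fix M :: "'a measure" and r :: real
  assume "finsupp_on K M" "0 < r"
  then obtain S where "prob_on K M" "finite S" "measure M S = 1"
    by (auto simp: finsupp_on_def measure_def)
  with \<open>0 < r\<close> assms(2) have "\<forall>\<^sub>F t in at_right 0. 0 < t \<and> (\<forall>N. prob_on K N \<and> FM_dist K M N \<le> t * (t / 2) \<longrightarrow>
      corr_int N r q \<le> 2 * corr_int M (2 * r) q \<and> corr_int M r q / 2 \<le> corr_int N (2 * r) q)"
    (is "eventually ?good _")
    by (intro eventually_conj eventually_at_right_less eventually_corr_int_bounds_at_right_0)
  then obtain t where "?good t"
    using eventually_happens'[OF trivial_limit_at_right_real] by blast
  then show "\<exists>\<delta>>0. \<forall>N. prob_on K N \<and> FM_dist K M N < \<delta> \<longrightarrow>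
      corr_int N r q \<le> 2 * corr_int M (2 * r) q \<and> corr_int N (2 * r) q \<ge> corr_int M r q / 2"
    by (intro exI[of _ "t * (t / 2)"]) auto
qed

end
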